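(* Let $D=(V,A)$ be a digraph with minimum in-degree at least 1, and let $\mathcal{L}D=\mathcal{L}_{(A',\phi)}D$ be a partial line digraph of $D$. Then $\mathcal{L}D$ has a nonempty semikernel if and only if $D$ has a nonempty semikernel.
   Context: Digraphs are loopless and without multiple arcs. For $U\subseteq V$, $\omega^-(U)=\{(x,y)\in A: y\in U,\ x\notin U\}$ and $\omega^+(U)=\{(x,y)\in A: x\in U,\ y\notin U\}$; for a vertex $j$, $\omega^-(j)$ is the set of arcs with terminal vertex $j$. For a set of arcs $\Omega$, $H(\Omega)=\{y:(x,y)\in\Omega\}$. The arc $(x,y)$ is also written $xy$. Partial line digraph: given $D=(V,A)$ with minimum in-degree at least 1, take an arc subset $A'\subseteq A$ and a surjective map $\phi:A\to A'$ such that (i) $H(A')=V$; (ii) $\phi$ restricted to $A'$ is the identity, and for every vertex $j\in V$, $\phi(\omega^-(j))\subseteq\omega^-(j)\cap A'$. The partial line digraph $\mathcal{L}_{(A',\phi)}D$ has vertex set $A'$ and arc set $\{(ij,\phi(j,k)) : ij\in A',\ (j,k)\in A\}$. A semikernel of a digraph is an independent vertex set $S$ (no arc joins two vertices of $S$) such that for every arc $(s,x)\in\omega^+(S)$ there is an arc $(x,s')\in\omega^-(S)$. *)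

theory Defs
  imports Main
begin

definition digraph :: "'a set \<Rightarrow> ('a \<times> 'a) set \<Rightarrow> bool" where
  "digraph V A \<longleftrightarrow> finite V \<and> A \<subseteq> V \<times> V \<and> (\<forall>(x,y)\<in>A. x \<noteq> y)"

definition in_arcs :: "('a \<times> 'a) set \<Rightarrow> 'a \<Rightarrow> ('a \<times> 'a) set" where
  "in_arcs A j = {(x,y) \<in> A. y = j}"

definition min_indeg_ge1 :: "'a set \<Rightarrow> ('a \<times> 'a) set \<Rightarrow> bool" where
  "min_indeg_ge1 V A \<longleftrightarrow> (\<forall>j\<in>V. in_arcs A j \<noteq> {})"

definition heads :: "('a \<times> 'a) set \<Rightarrow> 'a set" where
  "heads \<Omega> = {y. \<exists>x. (x,y) \<in> \<Omega>}"

definition pld_data :: "'a set \<Rightarrow> ('a \<times> 'a) set \<Rightarrow> ('a \<times> 'a) set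
    \<Rightarrow> (('a \<times> 'a) \<Rightarrow> ('a \<times> 'a)) \<Rightarrow> bool" where
  "pld_data V A A' \<phi> \<longleftrightarrow>
     A' \<subseteq> A \<and> \<phi> ` A = A' \<and> heads A' = V \<and>
     (\<forall>a\<in>A'. \<phi> a = a) \<and>
     (\<forall>j\<in>V. \<phi> ` in_arcs A j \<subseteq> in_arcs A j \<inter> A')"

text \<open>Arc set of the partial line digraph (its vertex set is A').\<close>
definition pld_arcs :: "('a \<times> 'a) set \<Rightarrow> ('a \<times> 'a) set
    \<Rightarrow> (('a \<times> 'a) \<Rightarrow> ('a \<times> 'a)) \<Rightarrow> (('a \<times> 'a) \<times> ('a \<times> 'a)) set" where
  "pld_arcs A A' \<phi> = {((i,j), \<phi> (j',k)) | i j j' k. (i,j) \<in> A' \<and> (j',k) \<in> A \<and> j' = j}"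

definition semikernel :: "'b set \<Rightarrow> ('b \<times> 'b) set \<Rightarrow> 'b set \<Rightarrow> bool" where
  "semikernel V A S \<longleftrightarrow> S \<subseteq> V \<and>
     (\<forall>x\<in>S. \<forall>y\<in>S. (x,y) \<notin> A) \<and>
     (\<forall>s x. (s,x) \<in> A \<and> s \<in> S \<and> x \<notin> S \<longrightarrow> (\<exists>s'\<in>S. (x,s') \<in> A))"

end

theory Submission
  imports Defs
begin

text \<open>Since \<open>\<phi>\<close> preserves heads, an arc \<open>ij \<rightarrow> \<phi>(j,k)\<close> of the partial line digraph
  projects onto the arc \<open>jk\<close> of \<open>D\<close>, and every arc \<open>jk\<close> of \<open>D\<close> lifts to such an arc from
  any \<open>ij \<in> A'\<close>. Hence the heads of a semikernel of the partial line digraph form a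
  semikernel of \<open>D\<close>, and conversely the arcs of \<open>A'\<close> ending in a semikernel of \<open>D\<close> form a
  semikernel of the partial line digraph, which is nonempty because \<open>H(A') = V\<close>.\<close>

lemma mem_pld_arcs_iff:
  "(p, q) \<in> pld_arcs A A' \<phi> \<longleftrightarrow> p \<in> A' \<and> (\<exists>k. (snd p, k) \<in> A \<and> q = \<phi> (snd p, k))"
  unfolding pld_arcs_def by (cases p) auto

lemma pld_data_phi:
  assumes "A \<subseteq> V \<times> V" and "pld_data V A A' \<phi>" and "(j, k) \<in> A"
  shows "\<phi> (j, k) \<in> A'" and "snd (\<phi> (j, k)) = k"
proof -
  have "k \<in> V" using assms(1,3) by auto
  then have "\<phi> ` in_arcs A k \<subseteq> in_arcs A k \<inter> A'"
    using assms(2) unfolding pld_data_def by blast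
  moreover have "(j, k) \<in> in_arcs A k" using assms(3) unfolding in_arcs_def by auto
  ultimately have "\<phi> (j, k) \<in> in_arcs A k \<inter> A'" by blast
  then show "\<phi> (j, k) \<in> A'" and "snd (\<phi> (j, k)) = k" unfolding in_arcs_def by auto
qed

lemma semikernel_pld_heads:
  assumes AV: "A \<subseteq> V \<times> V" and pld: "pld_data V A A' \<phi>"
    and sk: "semikernel A' (pld_arcs A A' \<phi>) S'"
  shows "semikernel V A (snd ` S')"
proof -
  note phi = pld_data_phi[OF AV pld]
  have sub: "S' \<subseteq> A'" and A'A: "A' \<subseteq> A"
    using sk pld unfolding semikernel_def pld_data_def by auto
  have ind: "\<And>x y. x \<in> S' \<Longrightarrow> y \<in> S' \<Longrightarrow> (x, y) \<notin> pld_arcs A A' \<phi>"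
    and absorb: "\<And>s x. (s, x) \<in> pld_arcs A A' \<phi> \<Longrightarrow> s \<in> S' \<Longrightarrow> x \<notin> S'
                  \<Longrightarrow> \<exists>s'\<in>S'. (x, s') \<in> pld_arcs A A' \<phi>"
    using sk unfolding semikernel_def by blast+
  have lift: "((i, j), \<phi> (j, k)) \<in> pld_arcs A A' \<phi>" if "(i, j) \<in> S'" "(j, k) \<in> A" for i j k
    using that sub by (auto simp: mem_pld_arcs_iff)
  show ?thesis
    unfolding semikernel_def
  proof (intro conjI allI impI ballI)
    show "snd ` S' \<subseteq> V" using sub A'A AV by force
  next
    fix j k assume "j \<in> snd ` S'" "k \<in> snd ` S'"
    then obtain i y where ij: "(i, j) \<in> S'" and yk: "(y, k) \<in> S'" by auto
    show "(j, k) \<notin> A"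
    proof
      assume jk: "(j, k) \<in> A"
      have "\<phi> (j, k) \<notin> S'" using ind[OF ij] lift[OF ij jk] by blast
      then obtain s' where s': "s' \<in> S'" "(\<phi> (j, k), s') \<in> pld_arcs A A' \<phi>"
        using absorb[OF lift[OF ij jk] ij] by blast
      then obtain m where "(k, m) \<in> A" "s' = \<phi> (k, m)"
        using phi[OF jk] by (auto simp: mem_pld_arcs_iff)
      then have "((y, k), s') \<in> pld_arcs A A' \<phi>" using lift[OF yk] by simp
      then show False using ind[OF yk s'(1)] by blast
    qed
  next
    fix j k assume h: "(j, k) \<in> A \<and> j \<in> snd ` S' \<and> k \<notin> snd ` S'"
    then obtain i where ij: "(i, j) \<in> S'" by auto
    have "\<phi> (j, k) \<notin> S'" using phi[of j k] h by force
    then obtain s' where s': "s' \<in> S'" "(\<phi> (j, k), s') \<in> pld_arcs A A' \<phi>"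
      using absorb[OF lift[OF ij] ij] h by blast
    then obtain m where m: "(k, m) \<in> A" "s' = \<phi> (k, m)"
      using phi[of j k] h by (auto simp: mem_pld_arcs_iff)
    have "m \<in> snd ` S'" using phi[OF m(1)] m s' by force
    then show "\<exists>s'\<in>snd ` S'. (k, s') \<in> A" using m by blast
  qed
qed

lemma semikernel_pld_arcs_into:
  assumes AV: "A \<subseteq> V \<times> V" and pld: "pld_data V A A' \<phi>" and sk: "semikernel V A S"
  shows "semikernel A' (pld_arcs A A' \<phi>) {p \<in> A'. snd p \<in> S}"
proof -
  note phi = pld_data_phi[OF AV pld]
  have ind: "\<And>x y. x \<in> S \<Longrightarrow> y \<in> S \<Longrightarrow> (x, y) \<notin> A"
    and absorb: "\<And>s x. (s, x) \<in> A \<Longrightarrow> s \<in> S \<Longrightarrow> x \<notin> S \<Longrightarrow> \<exists>s'\<in>S. (x, s') \<in> A"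
    using sk unfolding semikernel_def by blast+
  show ?thesis
    unfolding semikernel_def
  proof (intro conjI allI impI ballI)
    show "{p \<in> A'. snd p \<in> S} \<subseteq> A'" by auto
  next
    fix p q assume p: "p \<in> {p \<in> A'. snd p \<in> S}" and q: "q \<in> {p \<in> A'. snd p \<in> S}"
    show "(p, q) \<notin> pld_arcs A A' \<phi>"
    proof
      assume "(p, q) \<in> pld_arcs A A' \<phi>"
      then obtain k where k: "(snd p, k) \<in> A" "q = \<phi> (snd p, k)"
        by (auto simp: mem_pld_arcs_iff)
      then have "k \<in> S" using q phi(2)[OF k(1)] by auto
      then show False using ind k(1) p by blast
    qed
  next
    fix p q assume h: "(p, q) \<in> pld_arcs A A' \<phi> \<and> p \<in> {p \<in> A'. snd p \<in> S}
                        \<and> q \<notin> {p \<in> A'. snd p \<in> S}"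
    then obtain k where k: "(snd p, k) \<in> A" "q = \<phi> (snd p, k)"
      by (auto simp: mem_pld_arcs_iff)
    have q: "q \<in> A'" "snd q = k" using phi[OF k(1)] k by auto
    then have "k \<notin> S" using h by auto
    then obtain m where m: "m \<in> S" "(k, m) \<in> A" using absorb k(1) h by blast
    have "(q, \<phi> (k, m)) \<in> pld_arcs A A' \<phi>" using q m by (auto simp: mem_pld_arcs_iff)
    moreover have "\<phi> (k, m) \<in> {p \<in> A'. snd p \<in> S}" using phi[OF m(2)] m by auto
    ultimately show "\<exists>s'\<in>{p \<in> A'. snd p \<in> S}. (q, s') \<in> pld_arcs A A' \<phi>" by blast
  qed
qed

lemma arcs_into_nonempty:
  assumes "heads A' = V" and "S \<subseteq> V" and "S \<noteq> {}"
  shows "{p \<in> A'. snd p \<in> S} \<noteq> {}"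
proof -
  obtain s where "s \<in> S" using assms(3) by auto
  with assms(1,2) obtain x where "(x, s) \<in> A'" unfolding heads_def by auto
  with \<open>s \<in> S\<close> show ?thesis by force
qed

theorem theorem2p7:
  fixes V :: "'a set" and A A' :: "('a \<times> 'a) set" and \<phi> :: "('a \<times> 'a) \<Rightarrow> ('a \<times> 'a)"
  assumes "digraph V A" and "min_indeg_ge1 V A" and "pld_data V A A' \<phi>"
  shows "(\<exists>S. S \<noteq> {} \<and> semikernel A' (pld_arcs A A' \<phi>) S)
         \<longleftrightarrow> (\<exists>S. S \<noteq> {} \<and> semikernel V A S)"
proof -
  have AV: "A \<subseteq> V \<times> V" using assms(1) unfolding digraph_def by auto
  have heads_V: "heads A' = V" using assms(3) unfolding pld_data_def by auto
  show ?thesis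
  proof
    assume "\<exists>S'. S' \<noteq> {} \<and> semikernel A' (pld_arcs A A' \<phi>) S'"
    then obtain S' where S': "S' \<noteq> {}" "semikernel A' (pld_arcs A A' \<phi>) S'" by blast
    have "snd ` S' \<noteq> {}" using S'(1) by simp
    with semikernel_pld_heads[OF AV assms(3) S'(2)]
    show "\<exists>S. S \<noteq> {} \<and> semikernel V A S" by (intro exI conjI)
  next
    assume "\<exists>S. S \<noteq> {} \<and> semikernel V A S"
    then obtain S where S: "S \<noteq> {}" "semikernel V A S" by blast
    have "S \<subseteq> V" using S(2) unfolding semikernel_def by simp
    with S(1) have "{p \<in> A'. snd p \<in> S} \<noteq> {}" by (intro arcs_into_nonempty[OF heads_V])
    with semikernel_pld_arcs_into[OF AV assms(3) S(2)]
    show "\<exists>S'. S' \<noteq> {} \<and> semikernel A' (pld_arcs A A' \<phi>) S'" by (intro exI conjI)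
  qed
qed

end
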